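(* Let $\mathbb F_q$ be a finite field and let $B \subseteq \mathbb F_q^m$ be $C$-weakly Sidorenko, with $r := \mathrm{rank}_{\mathrm{aff}}(B) \geq 1$. Then for every $n$, \[\mathrm{ex}_{\mathrm{aff}}(n,B) < q^{\,n - (n-r+1)/(C-r+1)}.\] Moreover, if $A \subseteq \mathbb F_q^n$ with $|A| = D q^{(1 - 1/(C-r+1))n}$ for some $D > 0$, then $A$ contains more than \[\left(1 - \frac{q^{r-1}}{D^{C-r+1}}\right)\frac{\alpha^C N^r}{|\mathrm{Aut}_{\mathrm{aff}}(B)|}\] subsets affinely isomorphic to $B$, where $N = q^n$ and $|A| = \alpha N$.
   Context: An affine relation on $x_1,\ldots,x_k$ is an equation $\sum_i \lambda_i x_i = 0$ with $\lambda_i \in \mathbb F_q$, $\sum_i \lambda_i = 0$; a set is affinely independent if it has no such relation with some $\lambda_i \ne 0$, and $\mathrm{rank}_{\mathrm{aff}}(B)$ is the size of a maximal affinely independent subset of $B$. For $B \subseteq \mathbb F_q^m$, $A \subseteq \mathbb F_q^n$, an affine homomorphism $B \to A$ is a map extending to an affine map $\mathbb F_q^m \to \mathbb F_q^n$; $\mathrm{hom}_{\mathrm{aff}}(B,A)$ is the number of them. An affine isomorphism is a bijective affine homomorphism whose inverse is an affine homomorphism; $\mathrm{Aut}_{\mathrm{aff}}(B)$ is the set of affine isomorphisms $B \to B$. A subset $B' \subseteq A$ is affinely isomorphic to $B$ if there is an affine isomorphism $B \to B'$; $A$ contains an affine copy of $B$ if it has such a subset. $\mathrm{ex}_{\mathrm{aff}}(n,B)$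 is the maximum size of a subset of $\mathbb F_q^n$ containing no affine copy of $B$. $B$ is $C$-weakly Sidorenko if for every $n$ and every $A \subseteq \mathbb F_q^n$ with $|A| = \alpha q^n$, $\mathrm{hom}_{\mathrm{aff}}(B,A) \geq \alpha^C (q^n)^{\mathrm{rank}_{\mathrm{aff}}(B)}$. *)

theory Defs
  imports Complex_Main "HOL-Library.FuncSet"
begin

text \<open>The vector space F_q^n is represented as the set of functions
  nat => 'a vanishing outside {..<n}.\<close>

definition vecs :: "nat \<Rightarrow> (nat \<Rightarrow> 'a::field) set" where
  "vecs n = {v. \<forall>i\<ge>n. v i = 0}"

definition affine_map :: "nat \<Rightarrow> nat \<Rightarrow> ((nat \<Rightarrow> 'a::field) \<Rightarrow> (nat \<Rightarrow> 'a)) \<Rightarrow> bool" where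
  "affine_map m n f \<longleftrightarrow>
     (\<exists>(M :: nat \<Rightarrow> nat \<Rightarrow> 'a) (b :: nat \<Rightarrow> 'a). b \<in> vecs n \<and>
        (\<forall>x\<in>vecs m. f x = (\<lambda>i. if i < n then b i + (\<Sum>j<m. M i j * x j) else 0)))"

definition aff_ext :: "nat \<Rightarrow> nat \<Rightarrow> (nat \<Rightarrow> 'a::field) set \<Rightarrow> ((nat \<Rightarrow> 'a) \<Rightarrow> (nat \<Rightarrow> 'a)) \<Rightarrow> bool" where
  "aff_ext m n B g \<longleftrightarrow> (\<exists>f. affine_map m n f \<and> (\<forall>x\<in>B. g x = f x))"

definition aff_indep :: "(nat \<Rightarrow> 'a::field) set \<Rightarrow> bool" where
  "aff_indep S \<longleftrightarrow>
     (\<forall>c :: (nat \<Rightarrow> 'a) \<Rightarrow> 'a. (\<Sum>x\<in>S. c x) = 0 \<and> (\<forall>i. (\<Sum>x\<in>S. c x * x i) = 0)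
        \<longrightarrow> (\<forall>x\<in>S. c x = 0))"

definition rank_aff :: "(nat \<Rightarrow> 'a::field) set \<Rightarrow> nat" where
  "rank_aff B = Max {card S | S. S \<subseteq> B \<and> aff_indep S}"

definition hom_aff :: "nat \<Rightarrow> nat \<Rightarrow> (nat \<Rightarrow> 'a::field) set \<Rightarrow> (nat \<Rightarrow> 'a) set \<Rightarrow> nat" where
  "hom_aff m n B A = card {g \<in> B \<rightarrow>\<^sub>E A. aff_ext m n B g}"

definition aff_iso :: "nat \<Rightarrow> nat \<Rightarrow> (nat \<Rightarrow> 'a::field) set \<Rightarrow> (nat \<Rightarrow> 'a) set \<Rightarrow> ((nat \<Rightarrow> 'a) \<Rightarrow> (nat \<Rightarrow> 'a)) \<Rightarrow> bool" where
  "aff_iso m n B B' \<phi> \<longleftrightarrow> bij_betw \<phi> B B' \<and> aff_ext m n B \<phi> \<and>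
      aff_ext n m B' (the_inv_into B \<phi>)"

definition aff_isomorphic :: "nat \<Rightarrow> nat \<Rightarrow> (nat \<Rightarrow> 'a::field) set \<Rightarrow> (nat \<Rightarrow> 'a) set \<Rightarrow> bool" where
  "aff_isomorphic m n B B' \<longleftrightarrow> (\<exists>\<phi>. aff_iso m n B B' \<phi>)"

definition Aut_aff :: "nat \<Rightarrow> (nat \<Rightarrow> 'a::field) set \<Rightarrow> ((nat \<Rightarrow> 'a) \<Rightarrow> (nat \<Rightarrow> 'a)) set" where
  "Aut_aff m B = {\<phi> \<in> extensional B. aff_iso m m B B \<phi>}"

definition contains_aff_copy :: "nat \<Rightarrow> nat \<Rightarrow> (nat \<Rightarrow> 'a::field) set \<Rightarrow> (nat \<Rightarrow> 'a) set \<Rightarrow> bool" where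
  "contains_aff_copy m n B A \<longleftrightarrow> (\<exists>B'. B' \<subseteq> A \<and> aff_isomorphic m n B B')"

definition ex_aff :: "nat \<Rightarrow> nat \<Rightarrow> (nat \<Rightarrow> 'a::{finite,field}) set \<Rightarrow> nat" where
  "ex_aff m n B = Max {card A | A. A \<subseteq> vecs n \<and> \<not> contains_aff_copy m n B A}"

definition weakly_sidorenko :: "real \<Rightarrow> nat \<Rightarrow> (nat \<Rightarrow> 'a::{finite,field}) set \<Rightarrow> bool" where
  "weakly_sidorenko C m B \<longleftrightarrow>
     (\<forall>n A. A \<subseteq> (vecs n :: (nat \<Rightarrow> 'a) set) \<longrightarrow>
        real (hom_aff m n B A) \<ge>
          (real (card A) / real (card (UNIV :: 'a set)) ^ n) powr C * (real (card (UNIV :: 'a set)) ^ n) ^ rank_aff B)"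

end

theory Submission
  imports Defs "HOL-Library.Function_Algebras"
begin

(* Fix a maximal affinely independent e_0, ..., e_(r-1) in B. Every point of B is an affine
  combination of the e_k, so an affine homomorphism g : B -> A is determined by the tuple
  (g e_0, ..., g e_(r-1)) in A^r. If this tuple is affinely independent, g is an affine
  isomorphism onto the copy g(B), and each copy is the image of at most |Aut(B)| such g.
  Otherwise some g e_j lies in the affine hull of its predecessors, which leaves fewer than
  q^(r-1) |A|^(r-1) tuples. Hence hom(B, A) < #copies |Aut(B)| + q^(r-1) |A|^(r-1), and
  comparing this with the weak Sidorenko bound alpha^C N^r gives both claims after taking
  logarithms (a one-point A shows C >= r). *)

lemma fun_sum_apply: "(\<Sum>x\<in>S. f x) i = (\<Sum>x\<in>S. f x i)"
  for f :: "'b \<Rightarrow> nat \<Rightarrow> 'a::comm_monoid_add"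
  by (induct S rule: infinite_finite_induct) auto

lemma finite_vecs: "finite (vecs n :: (nat \<Rightarrow> 'a::{finite,field}) set)"
proof (rule finite_subset)
  show "vecs n \<subseteq> (\<lambda>v i. if i < n then v i else 0) ` ({..<n} \<rightarrow>\<^sub>E (UNIV :: 'a set))"
  proof
    fix v :: "nat \<Rightarrow> 'a" assume "v \<in> vecs n"
    then have "v = (\<lambda>i. if i < n then restrict v {..<n} i else 0)"
      by (auto simp: vecs_def fun_eq_iff)
    moreover have "restrict v {..<n} \<in> {..<n} \<rightarrow>\<^sub>E (UNIV :: 'a set)" by simp
    ultimately show "v \<in> (\<lambda>v i. if i < n then v i else 0) ` ({..<n} \<rightarrow>\<^sub>E UNIV)"
      by (rule image_eqI)
  qed
qed (intro finite_imageI finite_PiE; simp)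

lemma finite_subset_vecs: "A \<subseteq> vecs n \<Longrightarrow> finite (A :: (nat \<Rightarrow> 'a::{finite,field}) set)"
  using finite_vecs finite_subset by blast

lemma card_UNIV_field_ge_2: "2 \<le> card (UNIV :: 'a::{finite,field} set)"
proof -
  have "card {0::'a, 1} \<le> card (UNIV :: 'a set)" by (rule card_mono) auto
  then show ?thesis by simp
qed

section \<open>Affine maps\<close>

lemma affine_map_in_vecs: "affine_map m n f \<Longrightarrow> x \<in> vecs m \<Longrightarrow> f x \<in> vecs n"
  unfolding affine_map_def vecs_def by auto

lemma affine_map_comp:
  assumes f: "affine_map m n f" and g: "affine_map n p g"
  shows "affine_map m p (g \<circ> f)"
proof -
  obtain M1 b1 where f_eq: "\<forall>x\<in>vecs m. f x = (\<lambda>i. if i < n then b1 i + (\<Sum>j<m. M1 i j * x j) else 0)"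
    using f unfolding affine_map_def by blast
  obtain M2 b2 where g_eq: "\<forall>x\<in>vecs n. g x = (\<lambda>i. if i < p then b2 i + (\<Sum>j<n. M2 i j * x j) else 0)"
    using g unfolding affine_map_def by blast
  define M where "M i j = (\<Sum>k<n. M2 i k * M1 k j)" for i j
  define b where "b i = (if i < p then b2 i + (\<Sum>k<n. M2 i k * b1 k) else 0)" for i
  have "(g \<circ> f) x = (\<lambda>i. if i < p then b i + (\<Sum>j<m. M i j * x j) else 0)" if x: "x \<in> vecs m" for x
  proof
    fix i
    have fx: "f x \<in> vecs n" by (rule affine_map_in_vecs[OF f x])
    have "(\<Sum>k<n. M2 i k * (\<Sum>j<m. M1 k j * x j)) = (\<Sum>j<m. M i j * x j)"
      unfolding M_def sum_distrib_left sum_distrib_right by (subst sum.swap) (simp add: mult_ac)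
    moreover have "(g \<circ> f) x i = (if i < p then b2 i + (\<Sum>k<n. M2 i k * (b1 k + (\<Sum>j<m. M1 k j * x j))) else 0)"
      using g_eq fx f_eq x by simp
    ultimately show "(g \<circ> f) x i = (if i < p then b i + (\<Sum>j<m. M i j * x j) else 0)"
      by (simp add: b_def distrib_left sum.distrib)
  qed
  moreover have "b \<in> vecs p" unfolding b_def vecs_def by auto
  ultimately show ?thesis unfolding affine_map_def by blast
qed

lemma affine_map_id: "affine_map m m (\<lambda>x. x)"
  unfolding affine_map_def
proof (intro exI conjI ballI)
  show "(\<lambda>_. 0) \<in> vecs m" by (simp add: vecs_def)
  fix x :: "nat \<Rightarrow> 'a" assume "x \<in> vecs m"
  then show "x = (\<lambda>i. if i < m then 0 + (\<Sum>j<m. of_bool (i = j) * x j) else 0)"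
    by (subst sum_of_bool_mult_eq) (auto simp: vecs_def)
qed

lemma aff_ext_cong: "aff_ext m n B g \<Longrightarrow> (\<And>x. x \<in> B \<Longrightarrow> g x = h x) \<Longrightarrow> aff_ext m n B h"
  unfolding aff_ext_def by metis

lemma aff_ext_comp:
  assumes "aff_ext m n B g" "aff_ext n p B' h" "g ` B \<subseteq> B'"
  shows "aff_ext m p B (h \<circ> g)"
proof -
  obtain F where F: "affine_map m n F" "\<forall>x\<in>B. g x = F x"
    using assms(1) unfolding aff_ext_def by blast
  obtain G where G: "affine_map n p G" "\<forall>x\<in>B'. h x = G x"
    using assms(2) unfolding aff_ext_def by blast
  have "\<forall>x\<in>B. (h \<circ> g) x = (G \<circ> F) x" using F(2) G(2) assms(3) by auto
  then show ?thesis using affine_map_comp[OF F(1) G(1)] unfolding aff_ext_def by blast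
qed

lemma aff_ext_id: "aff_ext m m B (\<lambda>x. x)"
  using affine_map_id unfolding aff_ext_def by blast

text \<open>Weights are extensional so that the hull of a tuple is the image of a finite set of weights.\<close>

definition affine_weights :: "nat \<Rightarrow> (nat \<Rightarrow> 'a::field) set" where
  "affine_weights j = {\<mu> \<in> {..<j} \<rightarrow>\<^sub>E UNIV. sum \<mu> {..<j} = 1}"

definition aff_comb :: "(nat \<Rightarrow> 'a::field) \<Rightarrow> (nat \<Rightarrow> nat \<Rightarrow> 'a) \<Rightarrow> nat \<Rightarrow> nat \<Rightarrow> 'a" where
  "aff_comb \<mu> t j = (\<lambda>i. \<Sum>k<j. \<mu> k * t k i)"

definition aff_hull_tuple :: "(nat \<Rightarrow> nat \<Rightarrow> 'a::field) \<Rightarrow> nat \<Rightarrow> (nat \<Rightarrow> 'a) set" where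
  "aff_hull_tuple t j = (\<lambda>\<mu>. aff_comb \<mu> t j) ` affine_weights j"

definition aff_indep_tuple :: "(nat \<Rightarrow> nat \<Rightarrow> 'a::field) \<Rightarrow> nat \<Rightarrow> bool" where
  "aff_indep_tuple t r \<longleftrightarrow> inj_on t {..<r} \<and> aff_indep (t ` {..<r})"

lemma aff_comb_cong: "(\<And>k. k < j \<Longrightarrow> \<mu> k = \<nu> k) \<Longrightarrow> (\<And>k. k < j \<Longrightarrow> t k = u k) \<Longrightarrow>
    aff_comb \<mu> t j = aff_comb \<nu> u j"
  unfolding aff_comb_def by (intro ext sum.cong) auto

lemma aff_comb_in_vecs: "(\<And>k. k < j \<Longrightarrow> t k \<in> vecs m) \<Longrightarrow> aff_comb \<mu> t j \<in> vecs m"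
  unfolding vecs_def aff_comb_def by auto

lemma mem_aff_hull_tuple_iff:
  "x \<in> aff_hull_tuple t j \<longleftrightarrow> (\<exists>\<mu>. sum \<mu> {..<j} = 1 \<and> x = aff_comb \<mu> t j)"
proof
  assume "\<exists>\<mu>. sum \<mu> {..<j} = 1 \<and> x = aff_comb \<mu> t j"
  then obtain \<mu> where "sum \<mu> {..<j} = 1" "x = aff_comb \<mu> t j" by blast
  moreover have "aff_comb (restrict \<mu> {..<j}) t j = aff_comb \<mu> t j"
    by (rule aff_comb_cong) auto
  ultimately show "x \<in> aff_hull_tuple t j"
    unfolding aff_hull_tuple_def affine_weights_def by (intro image_eqI[of _ _ "restrict \<mu> {..<j}"]) auto
qed (auto simp: aff_hull_tuple_def affine_weights_def)

lemma affine_map_aff_comb: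
  assumes f: "affine_map m n f" and t: "\<And>k. k < j \<Longrightarrow> t k \<in> vecs m" and \<mu>: "sum \<mu> {..<j} = 1"
  shows "f (aff_comb \<mu> t j) = aff_comb \<mu> (\<lambda>k. f (t k)) j"
proof -
  obtain M b where f_eq: "\<forall>x\<in>vecs m. f x = (\<lambda>i. if i < n then b i + (\<Sum>l<m. M i l * x l) else 0)"
    using f unfolding affine_map_def by blast
  have "b i + (\<Sum>l<m. M i l * (\<Sum>k<j. \<mu> k * t k l)) = (\<Sum>k<j. \<mu> k * (b i + (\<Sum>l<m. M i l * t k l)))" for i
  proof -
    have "(\<Sum>l<m. M i l * (\<Sum>k<j. \<mu> k * t k l)) = (\<Sum>l<m. \<Sum>k<j. \<mu> k * (M i l * t k l))"
      by (simp add: sum_distrib_left mult_ac)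
    also have "\<dots> = (\<Sum>k<j. \<mu> k * (\<Sum>l<m. M i l * t k l))"
      by (subst sum.swap) (simp add: sum_distrib_left)
    finally have "(\<Sum>l<m. M i l * (\<Sum>k<j. \<mu> k * t k l)) = (\<Sum>k<j. \<mu> k * (\<Sum>l<m. M i l * t k l))" .
    then show ?thesis using \<mu> by (simp add: distrib_left sum.distrib sum_distrib_right[symmetric])
  qed
  then show ?thesis
    using f_eq t aff_comb_in_vecs[OF t] by (simp add: aff_comb_def fun_eq_iff)
qed

definition fun_scale :: "'a::field \<Rightarrow> (nat \<Rightarrow> 'a) \<Rightarrow> (nat \<Rightarrow> 'a)" where
  "fun_scale c v = (\<lambda>i. c * v i)"

lemma vector_space_fun_scale: "vector_space (fun_scale :: 'a::field \<Rightarrow> _)"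
  by unfold_locales (auto simp: fun_scale_def fun_eq_iff algebra_simps)

text \<open>In homogeneous coordinates (1, x) affine maps become linear, so the extension of linear maps
  from independent sets in the library applies.\<close>

definition homog :: "(nat \<Rightarrow> 'a::field) \<Rightarrow> (nat \<Rightarrow> 'a)" where
  "homog x = (\<lambda>i. if i = 0 then 1 else x (i - 1))"

lemma homog_0 [simp]: "homog x 0 = 1" and homog_Suc [simp]: "homog x (Suc i) = x i"
  by (simp_all add: homog_def)

lemma inj_homog: "inj homog"
  by (rule injI) (metis ext homog_Suc)

lemma independent_homog_image:
  assumes "finite P" "aff_indep P"
  shows "\<not> module.dependent fun_scale (homog ` P)"
proof (rule vector_space.independent_if_scalars_zero[OF vector_space_fun_scale])
  show "finite (homog ` P)" using assms(1) by simp
  fix c v assume sum0: "(\<Sum>x\<in>homog ` P. fun_scale (c x) x) = 0" and v: "v \<in> homog ` P"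
  have s: "(\<Sum>p\<in>P. fun_scale (c (homog p)) (homog p)) = 0"
    using sum0 by (simp add: sum.reindex[OF inj_on_subset[OF inj_homog subset_UNIV]])
  have "(\<Sum>p\<in>P. c (homog p)) = 0"
    using fun_cong[OF s, of 0] by (simp add: fun_sum_apply fun_scale_def)
  moreover have "\<forall>i. (\<Sum>p\<in>P. c (homog p) * p i) = 0"
    using fun_cong[OF s, of "Suc i" for i] by (simp add: fun_sum_apply fun_scale_def)
  ultimately show "c v = 0" using assms(2) v unfolding aff_indep_def by blast
qed

lemma homog_eq_sum:
  assumes "x \<in> vecs n"
  shows "homog x = (\<lambda>i. of_bool (i = 0)) + (\<Sum>j<n. fun_scale (x j) (\<lambda>i. of_bool (i = Suc j)))"
proof
  fix i show "homog x i = ((\<lambda>i. of_bool (i = 0)) + (\<Sum>j<n. fun_scale (x j) (\<lambda>i. of_bool (i = Suc j)))) i"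
    using assms by (cases i) (auto simp: fun_sum_apply fun_scale_def vecs_def mult.commute sum_of_bool_mult_eq Int_insert_right)
qed

lemma affine_map_linear_homog:
  assumes "Vector_Spaces.linear fun_scale fun_scale L"
  shows "affine_map n m (\<lambda>x i. if i < m then L (homog x) i else 0)"
proof -
  have L: "module_hom fun_scale fun_scale L" using assms by (simp add: module_hom_iff_linear)
  define b where "b i = (if i < m then L (\<lambda>k. of_bool (k = 0)) i else 0)" for i
  define M where "M i j = L (\<lambda>k. of_bool (k = Suc j)) i" for i j
  have "L (homog x) = L (\<lambda>k. of_bool (k = 0)) + (\<Sum>j<n. fun_scale (x j) (L (\<lambda>k. of_bool (k = Suc j))))"
    if "x \<in> vecs n" for x
    using that by (simp add: homog_eq_sum module_hom.add[OF L] module_hom.sum[OF L] module_hom.scale[OF L])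
  then have "(\<lambda>i. if i < m then L (homog x) i else 0) = (\<lambda>i. if i < m then b i + (\<Sum>j<n. M i j * x j) else 0)"
    if "x \<in> vecs n" for x
    using that by (simp add: fun_eq_iff fun_sum_apply fun_scale_def b_def M_def mult.commute)
  moreover have "b \<in> vecs m" by (simp add: b_def vecs_def)
  ultimately show ?thesis unfolding affine_map_def by blast
qed

lemma affine_map_extend_aff_indep:
  assumes P: "finite P" "P \<subseteq> vecs n" "aff_indep P" and \<phi>: "\<phi> ` P \<subseteq> vecs m"
  shows "\<exists>h. affine_map n m h \<and> (\<forall>p\<in>P. h p = \<phi> p)"
proof -
  obtain L where L: "Vector_Spaces.linear fun_scale fun_scale L"
    and L_homog: "\<forall>v\<in>homog ` P. L v = \<phi> (inv homog v)"
    using vector_space_pair.linear_independent_extend[of fun_scale fun_scale,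
        OF _ independent_homog_image[OF P(1,3)], of "\<lambda>v. \<phi> (inv homog v)"]
      vector_space_fun_scale unfolding vector_space_pair_def by blast
  have "L (homog p) i = \<phi> p i" if "p \<in> P" for p i
    using L_homog that by (simp add: inv_f_f[OF inj_homog])
  then have "\<forall>p\<in>P. (\<lambda>i. if i < m then L (homog p) i else 0) = \<phi> p"
    using \<phi> by (auto simp: vecs_def fun_eq_iff)
  then show ?thesis using affine_map_linear_homog[OF L] by blast
qed

section \<open>Affinely independent tuples\<close>

lemma aff_indep_tuple_iff:
  "aff_indep_tuple t r \<longleftrightarrow>
    (\<forall>d. sum d {..<r} = 0 \<and> (\<forall>i. (\<Sum>k<r. d k * t k i) = 0) \<longrightarrow> (\<forall>k<r. d k = 0))"
proof
  assume indep: "aff_indep_tuple t r"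
  show "\<forall>d. sum d {..<r} = 0 \<and> (\<forall>i. (\<Sum>k<r. d k * t k i) = 0) \<longrightarrow> (\<forall>k<r. d k = 0)"
  proof (rule allI, rule impI)
    fix d assume d: "sum d {..<r} = 0 \<and> (\<forall>i. (\<Sum>k<r. d k * t k i) = 0)"
    have inj: "inj_on t {..<r}" using indep by (simp add: aff_indep_tuple_def)
    define c where "c y = d (the_inv_into {..<r} t y)" for y
    have c_t: "c (t k) = d k" if "k < r" for k using inj that by (simp add: c_def the_inv_into_f_f)
    have "(\<Sum>y\<in>t ` {..<r}. c y) = 0" "\<forall>i. (\<Sum>y\<in>t ` {..<r}. c y * y i) = 0"
      using d inj c_t by (simp_all add: sum.reindex)
    then have "\<forall>y\<in>t ` {..<r}. c y = 0" using indep unfolding aff_indep_tuple_def aff_indep_def by blast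
    then show "\<forall>k<r. d k = 0" using c_t by auto
  qed
next
  assume coeffs: "\<forall>d. sum d {..<r} = 0 \<and> (\<forall>i. (\<Sum>k<r. d k * t k i) = 0) \<longrightarrow> (\<forall>k<r. d k = 0)"
  have inj: "inj_on t {..<r}"
  proof (rule inj_onI, rule ccontr)
    fix a b assume ab: "a \<in> {..<r}" "b \<in> {..<r}" "t a = t b" "a \<noteq> b"
    define d :: "nat \<Rightarrow> 'a" where "d k = of_bool (k = a) - of_bool (k = b)" for k
    have "sum d {..<r} = 0" "\<forall>i. (\<Sum>k<r. d k * t k i) = 0"
      using ab by (simp_all add: d_def left_diff_distrib sum_subtractf sum_of_bool_mult_eq Int_insert_right)
    then have "d a = 0" using coeffs ab by blast
    then show False using ab by (simp add: d_def)
  qed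
  moreover have "aff_indep (t ` {..<r})"
    unfolding aff_indep_def
  proof (intro allI impI)
    fix c :: "(nat \<Rightarrow> 'a) \<Rightarrow> 'a" assume "(\<Sum>y\<in>t ` {..<r}. c y) = 0 \<and> (\<forall>i. (\<Sum>y\<in>t ` {..<r}. c y * y i) = 0)"
    then have "sum (c \<circ> t) {..<r} = 0 \<and> (\<forall>i. (\<Sum>k<r. (c \<circ> t) k * t k i) = 0)"
      using inj by (simp add: sum.reindex)
    then show "\<forall>y\<in>t ` {..<r}. c y = 0" using coeffs by auto
  qed
  ultimately show "aff_indep_tuple t r" by (simp add: aff_indep_tuple_def)
qed

lemma aff_indep_tuple_cong: "(\<And>k. k < r \<Longrightarrow> t k = u k) \<Longrightarrow> aff_indep_tuple t r \<longleftrightarrow> aff_indep_tuple u r"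
  unfolding aff_indep_tuple_iff by (metis (no_types, lifting) lessThan_iff sum.cong)

lemma aff_hull_tuple_cong: "(\<And>k. k < j \<Longrightarrow> t k = u k) \<Longrightarrow> aff_hull_tuple t j = aff_hull_tuple u j"
  unfolding aff_hull_tuple_def by (intro image_cong refl aff_comb_cong) auto

lemma aff_indep_tuple_Suc:
  assumes indep: "aff_indep_tuple t j" and not_hull: "t j \<notin> aff_hull_tuple t j"
  shows "aff_indep_tuple t (Suc j)"
  unfolding aff_indep_tuple_iff
proof (rule allI, rule impI)
  fix d assume d: "sum d {..<Suc j} = 0 \<and> (\<forall>i. (\<Sum>k<Suc j. d k * t k i) = 0)"
  have d_j: "d j = 0"
  proof (rule ccontr)
    assume "d j \<noteq> 0"
    then have "sum (\<lambda>k. - d k / d j) {..<j} = 1" "t j = aff_comb (\<lambda>k. - d k / d j) t j"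
      using d by (auto simp: aff_comb_def fun_eq_iff sum_negf field_simps
          simp flip: sum_divide_distrib eq_neg_iff_add_eq_0)
    then show False using not_hull by (auto simp: mem_aff_hull_tuple_iff)
  qed
  then have "\<forall>k<j. d k = 0" using d indep by (simp add: aff_indep_tuple_iff)
  then show "\<forall>k<Suc j. d k = 0" using d_j less_Suc_eq by auto
qed

lemma aff_indep_tuple_if_not_in_hulls: "(\<And>j. j < r \<Longrightarrow> t j \<notin> aff_hull_tuple t j) \<Longrightarrow> aff_indep_tuple t r"
proof (induction r)
  case 0
  show ?case by (simp add: aff_indep_tuple_def aff_indep_def)
next
  case (Suc r)
  then show ?case by (simp add: aff_indep_tuple_Suc)
qed

lemma rank_aff_witness:
  fixes B :: "(nat \<Rightarrow> 'a::field) set"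
  assumes "finite B"
  obtains S where "S \<subseteq> B" "aff_indep S" "card S = rank_aff B"
    "\<And>T. T \<subseteq> B \<Longrightarrow> aff_indep T \<Longrightarrow> card T \<le> card S"
proof -
  let ?R = "{card S | S. S \<subseteq> B \<and> aff_indep S}"
  have "?R \<subseteq> card ` Pow B" by blast
  then have fin: "finite ?R" using assms by (meson finite_Pow_iff finite_imageI finite_subset)
  have "aff_indep ({} :: (nat \<Rightarrow> 'a) set)" by (simp add: aff_indep_def)
  then have ne: "?R \<noteq> {}" by blast
  have "rank_aff B \<in> ?R" unfolding rank_aff_def using Max_in[OF fin ne] .
  moreover have "card T \<le> rank_aff B" if "T \<subseteq> B" "aff_indep T" for T
    unfolding rank_aff_def by (rule Max_ge[OF fin]) (use that in blast)
  ultimately show thesis using that by auto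
qed

lemma rank_aff_empty: "rank_aff ({} :: (nat \<Rightarrow> 'a::field) set) = 0"
proof -
  have "{card S | S :: (nat \<Rightarrow> 'a) set. S \<subseteq> {} \<and> aff_indep S} = {0}" by (auto simp: aff_indep_def)
  then show ?thesis unfolding rank_aff_def by simp
qed

lemma aff_spanning_tuple:
  assumes "finite B"
  obtains e where "\<And>k. k < rank_aff B \<Longrightarrow> e k \<in> B" "B \<subseteq> aff_hull_tuple e (rank_aff B)"
proof -
  let ?r = "rank_aff B"
  obtain S where S: "S \<subseteq> B" "aff_indep S" "card S = ?r"
    and S_max: "\<And>T. T \<subseteq> B \<Longrightarrow> aff_indep T \<Longrightarrow> card T \<le> card S"
    using rank_aff_witness[OF assms] by blast
  obtain e where e: "bij_betw e {..<?r} S"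
    using ex_bij_betw_nat_finite[of S] S(3) finite_subset[OF S(1) assms] by (auto simp: atLeast0LessThan)
  have e_B: "e k \<in> B" if "k < ?r" for k using e S(1) that by (auto simp: bij_betw_def)
  have indep: "aff_indep_tuple e ?r" using e S(2) by (simp add: aff_indep_tuple_def bij_betw_def)
  have "b \<in> aff_hull_tuple e ?r" if b: "b \<in> B" for b
  proof (rule ccontr)
    assume not_hull: "b \<notin> aff_hull_tuple e ?r"
    define e' where "e' = e(?r := b)"
    have "aff_indep_tuple e' ?r" "aff_hull_tuple e' ?r = aff_hull_tuple e ?r"
      using indep by (simp_all add: e'_def cong: aff_indep_tuple_cong aff_hull_tuple_cong)
    then have "aff_indep_tuple e' (Suc ?r)"
      using not_hull by (intro aff_indep_tuple_Suc) (simp_all add: e'_def)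
    moreover have "e' ` {..<Suc ?r} \<subseteq> B" using b e_B by (auto simp: e'_def)
    ultimately have "card (e' ` {..<Suc ?r}) \<le> card S"
      by (intro S_max) (simp_all add: aff_indep_tuple_def)
    moreover have "card (e' ` {..<Suc ?r}) = Suc ?r"
      using \<open>aff_indep_tuple e' (Suc ?r)\<close> by (simp add: aff_indep_tuple_def card_image)
    ultimately show False using S(3) by simp
  qed
  then show thesis using that e_B by blast
qed

lemma finite_affine_weights: "finite (affine_weights j :: (nat \<Rightarrow> 'a::{finite,field}) set)"
  by (rule finite_subset[of _ "{..<j} \<rightarrow>\<^sub>E UNIV"]) (auto simp: affine_weights_def intro: finite_PiE)

lemma affine_weights_0: "affine_weights 0 = {}"
  by (simp add: affine_weights_def)

lemma card_affine_weights_Suc_le: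
  "card (affine_weights (Suc j) :: (nat \<Rightarrow> 'a::{finite,field}) set) \<le> card (UNIV :: 'a set) ^ j"
proof -
  define extend :: "(nat \<Rightarrow> 'a) \<Rightarrow> (nat \<Rightarrow> 'a)" where
    "extend \<nu> l = (if l = 0 then 1 - sum \<nu> {..<j} else if l \<le> j then \<nu> (l - 1) else undefined)" for \<nu> l
  have incl: "affine_weights (Suc j) \<subseteq> extend ` ({..<j} \<rightarrow>\<^sub>E UNIV)"
  proof
    fix \<mu> :: "nat \<Rightarrow> 'a" assume "\<mu> \<in> affine_weights (Suc j)"
    then have \<mu>: "\<mu> \<in> {..<Suc j} \<rightarrow>\<^sub>E UNIV" "sum \<mu> {..<Suc j} = 1" unfolding affine_weights_def by blast+
    have "\<mu> = extend (restrict (\<lambda>k. \<mu> (Suc k)) {..<j})"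
    proof
      fix l
      have "\<mu> 0 + (\<Sum>k<j. \<mu> (Suc k)) = 1" using \<mu>(2) by (simp only: sum.lessThan_Suc_shift)
      moreover have "\<mu> l = undefined" if "\<not> l \<le> j" using PiE_arb[OF \<mu>(1)] that by simp
      ultimately show "\<mu> l = extend (restrict (\<lambda>k. \<mu> (Suc k)) {..<j}) l"
        by (auto simp: extend_def eq_diff_eq)
    qed
    moreover have "restrict (\<lambda>k. \<mu> (Suc k)) {..<j} \<in> {..<j} \<rightarrow>\<^sub>E UNIV" by simp
    ultimately show "\<mu> \<in> extend ` ({..<j} \<rightarrow>\<^sub>E UNIV)" by (rule image_eqI)
  qed
  have "card (affine_weights (Suc j) :: (nat \<Rightarrow> 'a) set) \<le> card (extend ` ({..<j} \<rightarrow>\<^sub>E UNIV))"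
    by (rule card_mono[OF _ incl]) (intro finite_imageI finite_PiE; simp)
  also have "\<dots> \<le> card ({..<j} \<rightarrow>\<^sub>E (UNIV :: 'a set))"
    by (intro card_image_le finite_PiE) simp_all
  finally show ?thesis by (simp add: card_PiE)
qed

lemma card_tuples_in_hull_le:
  fixes A :: "(nat \<Rightarrow> 'a::{finite,field}) set"
  assumes A: "finite A" and j: "j < r"
  shows "card {t \<in> {..<r} \<rightarrow>\<^sub>E A. t j \<in> aff_hull_tuple t j} \<le> card A ^ (r - 1) * card (affine_weights j :: (nat \<Rightarrow> 'a) set)"
proof -
  let ?P = "(({..<r} - {j}) \<rightarrow>\<^sub>E A) \<times> (affine_weights j :: (nat \<Rightarrow> 'a) set)"
  have "{t \<in> {..<r} \<rightarrow>\<^sub>E A. t j \<in> aff_hull_tuple t j} \<subseteq> (\<lambda>(u, \<mu>). u(j := aff_comb \<mu> u j)) ` ?P"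
  proof
    fix t assume "t \<in> {t \<in> {..<r} \<rightarrow>\<^sub>E A. t j \<in> aff_hull_tuple t j}"
    then have t: "t \<in> {..<r} \<rightarrow>\<^sub>E A" and "t j \<in> aff_hull_tuple t j" by simp_all
    then obtain \<mu> where \<mu>: "\<mu> \<in> affine_weights j" and t_j: "t j = aff_comb \<mu> t j"
      unfolding aff_hull_tuple_def by blast
    let ?u = "restrict t ({..<r} - {j})"
    have "aff_comb \<mu> ?u j = aff_comb \<mu> t j" by (rule aff_comb_cong) (use j in simp_all)
    then have "t = (\<lambda>(u, \<mu>). u(j := aff_comb \<mu> u j)) (?u, \<mu>)"
      using t_j PiE_arb[OF t] by (simp add: fun_eq_iff)
    moreover have "(?u, \<mu>) \<in> ?P" using t \<mu> by (auto simp: PiE_iff)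
    ultimately show "t \<in> (\<lambda>(u, \<mu>). u(j := aff_comb \<mu> u j)) ` ?P" by (rule image_eqI)
  qed
  moreover have "finite ?P" using A finite_affine_weights by (intro finite_cartesian_product finite_PiE) auto
  ultimately have "card {t \<in> {..<r} \<rightarrow>\<^sub>E A. t j \<in> aff_hull_tuple t j}
      \<le> card ((\<lambda>(u, \<mu>). u(j := aff_comb \<mu> u j)) ` ?P)"
    by (intro card_mono finite_imageI)
  also have "\<dots> \<le> card ?P" using \<open>finite ?P\<close> by (rule card_image_le)
  also have "\<dots> = card A ^ (r - 1) * card (affine_weights j :: (nat \<Rightarrow> 'a) set)"
    using j by (simp add: card_cartesian_product card_PiE)
  finally show ?thesis .
qed

lemma sum_powers_less: "2 \<le> q \<Longrightarrow> (\<Sum>j<n. q ^ j) < (q::nat) ^ n"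
proof (induction n)
  case (Suc n)
  then have "(\<Sum>j<Suc n. q ^ j) < 2 * q ^ n" by simp
  also have "\<dots> \<le> q ^ Suc n" using Suc.prems by simp
  finally show ?case .
qed simp

lemma card_dependent_tuples_less:
  fixes A :: "(nat \<Rightarrow> 'a::{finite,field}) set"
  assumes A: "finite A" "A \<noteq> {}" and r: "1 \<le> r"
  shows "card {t \<in> {..<r} \<rightarrow>\<^sub>E A. \<not> aff_indep_tuple t r} < card (UNIV :: 'a set) ^ (r - 1) * card A ^ (r - 1)"
proof -
  have "{t \<in> {..<r} \<rightarrow>\<^sub>E A. \<not> aff_indep_tuple t r} \<subseteq> (\<Union>j<r. {t \<in> {..<r} \<rightarrow>\<^sub>E A. t j \<in> aff_hull_tuple t j})"
    using aff_indep_tuple_if_not_in_hulls by blast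
  moreover have "finite (\<Union>j<r. {t \<in> {..<r} \<rightarrow>\<^sub>E A. t j \<in> aff_hull_tuple t j})"
    using A(1) by (intro finite_UN_I finite_subset[OF _ finite_PiE[of "{..<r}" "\<lambda>_. A"]]) auto
  ultimately have "card {t \<in> {..<r} \<rightarrow>\<^sub>E A. \<not> aff_indep_tuple t r}
      \<le> card (\<Union>j<r. {t \<in> {..<r} \<rightarrow>\<^sub>E A. t j \<in> aff_hull_tuple t j})"
    by (rule card_mono[rotated])
  also have "\<dots> \<le> (\<Sum>j<r. card {t \<in> {..<r} \<rightarrow>\<^sub>E A. t j \<in> aff_hull_tuple t j})"
    by (rule card_UN_le) simp
  also have "\<dots> \<le> card A ^ (r - 1) * (\<Sum>j<r. card (affine_weights j :: (nat \<Rightarrow> 'a) set))"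
    unfolding sum_distrib_left by (rule sum_mono) (rule card_tuples_in_hull_le[OF A(1)], simp)
  also have "\<dots> < card A ^ (r - 1) * card (UNIV :: 'a set) ^ (r - 1)"
  proof -
    obtain r' where r': "r = Suc r'" using r by (cases r) auto
    have "(\<Sum>j<r. card (affine_weights j :: (nat \<Rightarrow> 'a) set)) \<le> (\<Sum>j<r'. card (UNIV :: 'a set) ^ j)"
      unfolding r' sum.lessThan_Suc_shift by (simp add: affine_weights_0 sum_mono card_affine_weights_Suc_le)
    also have "\<dots> < card (UNIV :: 'a set) ^ (r - 1)" using sum_powers_less[OF card_UNIV_field_ge_2] r' by simp
    finally show ?thesis using A by (simp add: card_gt_0_iff)
  qed
  finally show ?thesis by (simp add: mult.commute)
qed

section \<open>Affine isomorphisms\<close>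

lemma aff_iso_cong:
  assumes iso: "aff_iso m n B B' \<phi>" and eq: "\<And>x. x \<in> B \<Longrightarrow> \<phi> x = \<psi> x"
  shows "aff_iso m n B B' \<psi>"
proof -
  have bij_\<phi>: "bij_betw \<phi> B B'" using iso by (simp add: aff_iso_def)
  then have bij_\<psi>: "bij_betw \<psi> B B'" using eq bij_betw_cong by blast
  have "aff_ext m n B \<psi>" by (rule aff_ext_cong[of _ _ _ \<phi>]) (use iso eq in \<open>simp_all add: aff_iso_def\<close>)
  moreover have "aff_ext n m B' (the_inv_into B \<psi>)"
  proof (rule aff_ext_cong[of _ _ _ "the_inv_into B \<phi>"])
    show "aff_ext n m B' (the_inv_into B \<phi>)" using iso by (simp add: aff_iso_def)
    fix y assume "y \<in> B'"
    then obtain x where x: "x \<in> B" "y = \<phi> x" using bij_\<phi> by (auto simp: bij_betw_def)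
    then have "the_inv_into B \<phi> y = x" using bij_\<phi> by (simp add: bij_betw_def the_inv_into_f_f)
    also have "\<dots> = the_inv_into B \<psi> y" using x bij_\<psi> eq by (simp add: bij_betw_def the_inv_into_f_f)
    finally show "the_inv_into B \<phi> y = the_inv_into B \<psi> y" .
  qed
  ultimately show ?thesis using bij_\<psi> by (simp add: aff_iso_def)
qed

lemma aff_iso_the_inv_into:
  assumes iso: "aff_iso m n B B' \<phi>"
  shows "aff_iso n m B' B (the_inv_into B \<phi>)"
proof -
  have bij: "bij_betw \<phi> B B'" using iso by (simp add: aff_iso_def)
  then have bij_inv: "bij_betw (the_inv_into B \<phi>) B' B" by (rule bij_betw_the_inv_into)
  have "aff_ext m n B (the_inv_into B' (the_inv_into B \<phi>))"
  proof (rule aff_ext_cong[of _ _ _ \<phi>])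
    show "aff_ext m n B \<phi>" using iso by (simp add: aff_iso_def)
    fix x assume "x \<in> B"
    then show "\<phi> x = the_inv_into B' (the_inv_into B \<phi>) x"
      using bij bij_inv by (intro the_inv_into_f_eq[symmetric]) (auto simp: bij_betw_def the_inv_into_f_f)
  qed
  then show ?thesis using iso bij_inv by (simp add: aff_iso_def)
qed

lemma aff_iso_comp:
  assumes \<phi>: "aff_iso m n B B' \<phi>" and \<psi>: "aff_iso n p B' B'' \<psi>"
  shows "aff_iso m p B B'' (\<psi> \<circ> \<phi>)"
proof -
  have bij_\<phi>: "bij_betw \<phi> B B'" and bij_\<psi>: "bij_betw \<psi> B' B''"
    using \<phi> \<psi> by (simp_all add: aff_iso_def)
  have "aff_ext m p B (\<psi> \<circ> \<phi>)"
    using \<phi> \<psi> bij_\<phi> by (intro aff_ext_comp) (auto simp: aff_iso_def bij_betw_def)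
  moreover have "aff_ext p m B'' (the_inv_into B (\<psi> \<circ> \<phi>))"
  proof (rule aff_ext_cong[of _ _ _ "the_inv_into B \<phi> \<circ> the_inv_into B' \<psi>"])
    show "aff_ext p m B'' (the_inv_into B \<phi> \<circ> the_inv_into B' \<psi>)"
      using \<phi> \<psi> bij_\<psi> by (intro aff_ext_comp) (auto simp: aff_iso_def bij_betw_def intro: the_inv_into_into)
    fix y assume "y \<in> B''"
    then show "(the_inv_into B \<phi> \<circ> the_inv_into B' \<psi>) y = the_inv_into B (\<psi> \<circ> \<phi>) y"
      using the_inv_into_comp[of \<psi> \<phi> B y] bij_\<phi> bij_\<psi> by (simp add: bij_betw_def)
  qed
  ultimately show ?thesis using bij_betw_trans[OF bij_\<phi> bij_\<psi>] by (simp add: aff_iso_def)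
qed

lemma finite_Aut_aff: "finite B \<Longrightarrow> finite (Aut_aff m B)"
  by (rule finite_subset[of _ "B \<rightarrow>\<^sub>E B"])
    (auto simp: Aut_aff_def aff_iso_def PiE_iff bij_betw_def extensional_def intro: finite_PiE)

lemma restrict_id_in_Aut_aff: "restrict (\<lambda>x. x) B \<in> Aut_aff m B"
proof -
  have "the_inv_into B (\<lambda>x. x) x = x" if "x \<in> B" for x
    using that by (intro the_inv_into_f_eq) simp_all
  then have "aff_ext m m B (the_inv_into B (\<lambda>x. x))" by (intro aff_ext_cong[OF aff_ext_id]) simp
  then have "aff_iso m m B B (\<lambda>x. x)" using aff_ext_id by (simp add: aff_iso_def bij_betw_def)
  then show ?thesis by (simp add: Aut_aff_def aff_iso_cong)
qed

lemma card_aff_isos_le_card_Aut_aff: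
  assumes "finite B" and \<psi>\<^sub>0: "aff_iso m n B B' \<psi>\<^sub>0"
  shows "card {\<psi> \<in> extensional B. aff_iso m n B B' \<psi>} \<le> card (Aut_aff m B)"
proof (rule card_inj_on_le[OF _ _ finite_Aut_aff[OF assms(1)]])
  let ?\<Phi> = "\<lambda>\<psi>. restrict (the_inv_into B \<psi>\<^sub>0 \<circ> \<psi>) B"
  have inv_iso: "aff_iso n m B' B (the_inv_into B \<psi>\<^sub>0)" by (rule aff_iso_the_inv_into[OF \<psi>\<^sub>0])
  show "?\<Phi> ` {\<psi> \<in> extensional B. aff_iso m n B B' \<psi>} \<subseteq> Aut_aff m B"
  proof (rule image_subsetI)
    fix \<psi> assume "\<psi> \<in> {\<psi> \<in> extensional B. aff_iso m n B B' \<psi>}"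
    then have "aff_iso m m B B (the_inv_into B \<psi>\<^sub>0 \<circ> \<psi>)" using aff_iso_comp[OF _ inv_iso] by blast
    then show "?\<Phi> \<psi> \<in> Aut_aff m B" by (simp add: Aut_aff_def aff_iso_cong)
  qed
  have inj_inv: "inj_on (the_inv_into B \<psi>\<^sub>0) B'"
    using inv_iso by (simp add: aff_iso_def bij_betw_def)
  show "inj_on ?\<Phi> {\<psi> \<in> extensional B. aff_iso m n B B' \<psi>}"
  proof (rule inj_onI)
    fix \<psi>\<^sub>1 \<psi>\<^sub>2 assume \<psi>\<^sub>1: "\<psi>\<^sub>1 \<in> {\<psi> \<in> extensional B. aff_iso m n B B' \<psi>}"
      and \<psi>\<^sub>2: "\<psi>\<^sub>2 \<in> {\<psi> \<in> extensional B. aff_iso m n B B' \<psi>}" and eq: "?\<Phi> \<psi>\<^sub>1 = ?\<Phi> \<psi>\<^sub>2"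
    show "\<psi>\<^sub>1 = \<psi>\<^sub>2"
    proof (rule extensionalityI)
      fix x assume x: "x \<in> B"
      have "\<psi>\<^sub>1 x \<in> B'" "\<psi>\<^sub>2 x \<in> B'" using \<psi>\<^sub>1 \<psi>\<^sub>2 x by (auto simp: aff_iso_def bij_betw_def)
      moreover have "the_inv_into B \<psi>\<^sub>0 (\<psi>\<^sub>1 x) = the_inv_into B \<psi>\<^sub>0 (\<psi>\<^sub>2 x)"
        using fun_cong[OF eq, of x] x by simp
      ultimately show "\<psi>\<^sub>1 x = \<psi>\<^sub>2 x" using inj_inv by (auto dest: inj_onD)
    qed (use \<psi>\<^sub>1 \<psi>\<^sub>2 in auto)
  qed
qed

section \<open>Counting affine homomorphisms\<close>

context
  fixes m :: nat and B :: "(nat \<Rightarrow> 'a::{finite,field}) set" and e :: "nat \<Rightarrow> nat \<Rightarrow> 'a" and r :: nat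
  assumes B_vecs: "B \<subseteq> vecs m" and e_in_B: "\<And>k. k < r \<Longrightarrow> e k \<in> B"
    and B_hull: "B \<subseteq> aff_hull_tuple e r"
begin

lemma aff_ext_aff_comb:
  assumes g: "aff_ext m n B g" and b: "b \<in> B" "b = aff_comb \<mu> e r" and \<mu>: "sum \<mu> {..<r} = 1"
  shows "g b = aff_comb \<mu> (g \<circ> e) r"
proof -
  obtain F where F: "affine_map m n F" "\<forall>x\<in>B. g x = F x" using g unfolding aff_ext_def by blast
  have "g b = F (aff_comb \<mu> e r)" using F(2) b by simp
  also have "\<dots> = aff_comb \<mu> (\<lambda>k. F (e k)) r"
    using e_in_B B_vecs by (intro affine_map_aff_comb[OF F(1) _ \<mu>]) blast
  also have "\<dots> = aff_comb \<mu> (g \<circ> e) r" using F(2) e_in_B by (intro aff_comb_cong) simp_all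
  finally show ?thesis .
qed

lemma aff_combE:
  assumes "b \<in> B"
  obtains \<mu> where "sum \<mu> {..<r} = 1" "b = aff_comb \<mu> e r"
  using assms B_hull mem_aff_hull_tuple_iff that by blast

lemma inj_on_restrict_comp_homs:
  "inj_on (\<lambda>g. restrict (g \<circ> e) {..<r}) {g \<in> B \<rightarrow>\<^sub>E A. aff_ext m n B g}"
proof (rule inj_onI)
  fix g\<^sub>1 g\<^sub>2 assume g\<^sub>1: "g\<^sub>1 \<in> {g \<in> B \<rightarrow>\<^sub>E A. aff_ext m n B g}" and g\<^sub>2: "g\<^sub>2 \<in> {g \<in> B \<rightarrow>\<^sub>E A. aff_ext m n B g}"
    and eq: "restrict (g\<^sub>1 \<circ> e) {..<r} = restrict (g\<^sub>2 \<circ> e) {..<r}"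
  show "g\<^sub>1 = g\<^sub>2"
  proof (rule extensionalityI)
    fix b assume b: "b \<in> B"
    then obtain \<mu> where \<mu>: "sum \<mu> {..<r} = 1" "b = aff_comb \<mu> e r" by (rule aff_combE)
    have "aff_comb \<mu> (g\<^sub>1 \<circ> e) r = aff_comb \<mu> (g\<^sub>2 \<circ> e) r"
    proof (rule aff_comb_cong)
      fix k assume "k < r"
      then show "(g\<^sub>1 \<circ> e) k = (g\<^sub>2 \<circ> e) k" using fun_cong[OF eq, of k] by simp
    qed simp
    then show "g\<^sub>1 b = g\<^sub>2 b"
      using aff_ext_aff_comb[of n g\<^sub>1 b \<mu>] aff_ext_aff_comb[of n g\<^sub>2 b \<mu>] g\<^sub>1 g\<^sub>2 b \<mu> by simp
  qed (use g\<^sub>1 g\<^sub>2 in \<open>auto simp: PiE_iff\<close>)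
qed

lemma inj_on_if_aff_indep_tuple:
  assumes g: "aff_ext m n B g" and indep: "aff_indep_tuple (g \<circ> e) r"
  shows "inj_on g B"
proof (rule inj_onI)
  fix b\<^sub>1 b\<^sub>2 assume b\<^sub>1: "b\<^sub>1 \<in> B" and b\<^sub>2: "b\<^sub>2 \<in> B" and eq: "g b\<^sub>1 = g b\<^sub>2"
  obtain \<mu>\<^sub>1 where \<mu>\<^sub>1: "sum \<mu>\<^sub>1 {..<r} = 1" "b\<^sub>1 = aff_comb \<mu>\<^sub>1 e r" using b\<^sub>1 by (rule aff_combE)
  obtain \<mu>\<^sub>2 where \<mu>\<^sub>2: "sum \<mu>\<^sub>2 {..<r} = 1" "b\<^sub>2 = aff_comb \<mu>\<^sub>2 e r" using b\<^sub>2 by (rule aff_combE)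
  have "aff_comb \<mu>\<^sub>1 (g \<circ> e) r = aff_comb \<mu>\<^sub>2 (g \<circ> e) r"
    using eq aff_ext_aff_comb[OF g b\<^sub>1 \<mu>\<^sub>1(2,1)] aff_ext_aff_comb[OF g b\<^sub>2 \<mu>\<^sub>2(2,1)] by simp
  then have "\<forall>i. (\<Sum>k<r. (\<mu>\<^sub>1 k - \<mu>\<^sub>2 k) * (g \<circ> e) k i) = 0"
    by (simp add: aff_comb_def fun_eq_iff left_diff_distrib sum_subtractf)
  moreover have "sum (\<lambda>k. \<mu>\<^sub>1 k - \<mu>\<^sub>2 k) {..<r} = 0" using \<mu>\<^sub>1 \<mu>\<^sub>2 by (simp add: sum_subtractf)
  ultimately have "\<forall>k<r. \<mu>\<^sub>1 k - \<mu>\<^sub>2 k = 0" using indep unfolding aff_indep_tuple_iff by blast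
  then show "b\<^sub>1 = b\<^sub>2" using \<mu>\<^sub>1 \<mu>\<^sub>2 by (auto intro: aff_comb_cong)
qed

lemma aff_ext_the_inv_into_if_aff_indep_tuple:
  assumes g: "aff_ext m n B g" "g ` B \<subseteq> vecs n" and indep: "aff_indep_tuple (g \<circ> e) r"
  shows "aff_ext n m (g ` B) (the_inv_into B g)"
proof -
  let ?P = "(g \<circ> e) ` {..<r}"
  have inj: "inj_on (g \<circ> e) {..<r}" using indep by (simp add: aff_indep_tuple_def)
  have inv_e: "the_inv_into {..<r} (g \<circ> e) (g (e k)) = k" if "k < r" for k
    using the_inv_into_f_f[OF inj, of k] that by simp
  have P: "finite ?P" "?P \<subseteq> vecs n" "aff_indep ?P"
    using indep g(2) e_in_B by (auto simp: aff_indep_tuple_def)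
  moreover have "(\<lambda>p. e (the_inv_into {..<r} (g \<circ> e) p)) ` ?P \<subseteq> vecs m"
    using inv_e e_in_B B_vecs by auto
  ultimately obtain h where h: "affine_map n m h" "\<forall>p\<in>?P. h p = e (the_inv_into {..<r} (g \<circ> e) p)"
    using affine_map_extend_aff_indep[OF P] by meson
  have h_e: "h (g (e k)) = e k" if "k < r" for k using h(2) inv_e that by simp
  have "the_inv_into B g y = h y" if "y \<in> g ` B" for y
  proof -
    obtain b where b: "b \<in> B" "y = g b" using \<open>y \<in> g ` B\<close> by blast
    obtain \<mu> where \<mu>: "sum \<mu> {..<r} = 1" "b = aff_comb \<mu> e r" using b(1) by (rule aff_combE)
    have "h y = h (aff_comb \<mu> (g \<circ> e) r)" using aff_ext_aff_comb[OF g(1) b(1) \<mu>(2,1)] b(2) by simp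
    also have "\<dots> = aff_comb \<mu> (\<lambda>k. h ((g \<circ> e) k)) r"
      using g(2) e_in_B by (intro affine_map_aff_comb[OF h(1) _ \<mu>(1)]) auto
    also have "\<dots> = aff_comb \<mu> e r" by (rule aff_comb_cong) (simp_all add: h_e)
    also have "\<dots> = b" using \<mu>(2) by simp
    finally show ?thesis using b inj_on_if_aff_indep_tuple[OF g(1) indep] by (simp add: the_inv_into_f_f)
  qed
  then show ?thesis using h(1) unfolding aff_ext_def by blast
qed

lemma aff_iso_if_aff_indep_tuple:
  assumes "aff_ext m n B g" "g ` B \<subseteq> vecs n" "aff_indep_tuple (g \<circ> e) r"
  shows "aff_iso m n B (g ` B) g"
  using assms inj_on_if_aff_indep_tuple aff_ext_the_inv_into_if_aff_indep_tuple
  by (simp add: aff_iso_def bij_betw_def)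

lemma card_indep_homs_le:
  assumes A: "A \<subseteq> vecs n"
  shows "card {g \<in> B \<rightarrow>\<^sub>E A. aff_ext m n B g \<and> aff_indep_tuple (g \<circ> e) r}
    \<le> card {B'. B' \<subseteq> A \<and> aff_isomorphic m n B B'} * card (Aut_aff m B)"
proof -
  let ?copies = "{B'. B' \<subseteq> A \<and> aff_isomorphic m n B B'}"
  let ?isos = "\<lambda>B'. {\<psi> \<in> extensional B. aff_iso m n B B' \<psi>}"
  have finB: "finite B" and finA: "finite A" using B_vecs A by (simp_all add: finite_subset_vecs)
  have "{g \<in> B \<rightarrow>\<^sub>E A. aff_ext m n B g \<and> aff_indep_tuple (g \<circ> e) r} \<subseteq> (\<Union>B'\<in>?copies. ?isos B')"
  proof
    fix g assume g: "g \<in> {g \<in> B \<rightarrow>\<^sub>E A. aff_ext m n B g \<and> aff_indep_tuple (g \<circ> e) r}"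
    then have "g ` B \<subseteq> A" "g \<in> extensional B" by (auto simp: PiE_iff)
    moreover have "aff_iso m n B (g ` B) g"
      using g A by (intro aff_iso_if_aff_indep_tuple) (auto simp: PiE_iff)
    ultimately show "g \<in> (\<Union>B'\<in>?copies. ?isos B')" by (auto simp: aff_isomorphic_def)
  qed
  moreover have "finite (\<Union>B'\<in>?copies. ?isos B')"
    by (rule finite_subset[of _ "B \<rightarrow>\<^sub>E A"])
      (use finA finB in \<open>auto simp: aff_iso_def bij_betw_def PiE_iff extensional_def intro: finite_PiE\<close>)
  ultimately have "card {g \<in> B \<rightarrow>\<^sub>E A. aff_ext m n B g \<and> aff_indep_tuple (g \<circ> e) r}
      \<le> card (\<Union>B'\<in>?copies. ?isos B')"
    by (rule card_mono[rotated])
  also have "\<dots> \<le> (\<Sum>B'\<in>?copies. card (?isos B'))"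
    by (rule card_UN_le) (use finA in simp)
  also have "\<dots> \<le> (\<Sum>B'\<in>?copies. card (Aut_aff m B))"
    by (rule sum_mono) (auto simp: aff_isomorphic_def intro: card_aff_isos_le_card_Aut_aff[OF finB])
  finally show ?thesis by simp
qed

lemma card_dep_homs_le:
  assumes A: "finite A"
  shows "card {g \<in> B \<rightarrow>\<^sub>E A. aff_ext m n B g \<and> \<not> aff_indep_tuple (g \<circ> e) r}
    \<le> card {t \<in> {..<r} \<rightarrow>\<^sub>E A. \<not> aff_indep_tuple t r}"
proof (rule card_inj_on_le)
  show "inj_on (\<lambda>g. restrict (g \<circ> e) {..<r}) {g \<in> B \<rightarrow>\<^sub>E A. aff_ext m n B g \<and> \<not> aff_indep_tuple (g \<circ> e) r}"
    by (rule inj_on_subset[OF inj_on_restrict_comp_homs]) blast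
  show "(\<lambda>g. restrict (g \<circ> e) {..<r}) ` {g \<in> B \<rightarrow>\<^sub>E A. aff_ext m n B g \<and> \<not> aff_indep_tuple (g \<circ> e) r}
      \<subseteq> {t \<in> {..<r} \<rightarrow>\<^sub>E A. \<not> aff_indep_tuple t r}"
    using e_in_B by (auto simp: PiE_iff cong: aff_indep_tuple_cong)
  show "finite {t \<in> {..<r} \<rightarrow>\<^sub>E A. \<not> aff_indep_tuple t r}"
    by (rule finite_subset[OF _ finite_PiE[of "{..<r}" "\<lambda>_. A"]]) (use A in auto)
qed

lemma hom_aff_less_spanning:
  assumes A: "A \<subseteq> vecs n" "A \<noteq> {}" and r: "1 \<le> r"
  shows "hom_aff m n B A < card {B'. B' \<subseteq> A \<and> aff_isomorphic m n B B'} * card (Aut_aff m B)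
           + card (UNIV :: 'a set) ^ (r - 1) * card A ^ (r - 1)"
proof -
  have finA: "finite A" using A(1) by (rule finite_subset_vecs)
  let ?indep = "{g \<in> B \<rightarrow>\<^sub>E A. aff_ext m n B g \<and> aff_indep_tuple (g \<circ> e) r}"
  let ?dep = "{g \<in> B \<rightarrow>\<^sub>E A. aff_ext m n B g \<and> \<not> aff_indep_tuple (g \<circ> e) r}"
  have "finite (B \<rightarrow>\<^sub>E A)" using finA B_vecs finite_subset_vecs by (auto intro: finite_PiE)
  then have "finite ?indep" "finite ?dep" by (auto intro: finite_subset[rotated])
  moreover have "{g \<in> B \<rightarrow>\<^sub>E A. aff_ext m n B g} = ?indep \<union> ?dep" by blast
  ultimately have "hom_aff m n B A = card ?indep + card ?dep"
    unfolding hom_aff_def by (simp add: card_Un_disjoint disjoint_iff)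
  then show ?thesis
    using card_indep_homs_le[OF A(1)] card_dep_homs_le[OF finA, of n] card_dependent_tuples_less[OF finA A(2) r]
    by linarith
qed

end

lemma hom_aff_less:
  fixes B :: "(nat \<Rightarrow> 'a::{finite,field}) set"
  assumes "B \<subseteq> vecs m" "A \<subseteq> vecs n" "A \<noteq> {}" "1 \<le> rank_aff B"
  shows "hom_aff m n B A < card {B'. B' \<subseteq> A \<and> aff_isomorphic m n B B'} * card (Aut_aff m B)
           + card (UNIV :: 'a set) ^ (rank_aff B - 1) * card A ^ (rank_aff B - 1)"
proof -
  obtain e where "\<And>k. k < rank_aff B \<Longrightarrow> e k \<in> B" "B \<subseteq> aff_hull_tuple e (rank_aff B)"
    using aff_spanning_tuple[OF finite_subset_vecs[OF assms(1)]] by blast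
  then show ?thesis using hom_aff_less_spanning assms by blast
qed

lemma weakly_sidorenko_rank_le:
  fixes B :: "(nat \<Rightarrow> 'a::{finite,field}) set"
  assumes B: "B \<subseteq> vecs m" and ws: "weakly_sidorenko C m B"
  shows "real (rank_aff B) \<le> C"
proof -
  let ?A = "{\<lambda>i. 0} :: (nat \<Rightarrow> 'a) set"
  let ?q = "real (card (UNIV :: 'a set))"
  have q: "1 < ?q" using card_UNIV_field_ge_2[where 'a='a] by linarith
  have "hom_aff m 1 B ?A \<le> card (B \<rightarrow>\<^sub>E ?A)"
    unfolding hom_aff_def using finite_subset_vecs[OF B] by (intro card_mono finite_PiE) auto
  also have "\<dots> = 1" using finite_subset_vecs[OF B] by (simp add: card_PiE)
  finally have "real (hom_aff m 1 B ?A) \<le> 1" by simp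
  moreover have "?A \<subseteq> vecs 1" by (simp add: vecs_def)
  then have "(real (card ?A) / ?q ^ 1) powr C * (?q ^ 1) ^ rank_aff B \<le> real (hom_aff m 1 B ?A)"
    using ws unfolding weakly_sidorenko_def by blast
  moreover have "(real (card ?A) / ?q ^ 1) powr C * (?q ^ 1) ^ rank_aff B = ?q powr (real (rank_aff B) - C)"
    using q by (simp add: powr_divide powr_diff powr_realpow[symmetric])
  ultimately have "?q powr (real (rank_aff B) - C) \<le> ?q powr 0" by simp
  then have "real (rank_aff B) - C \<le> 0" using powr_le_cancel_iff[OF q] by blast
  then show ?thesis by simp
qed

section \<open>Density bounds\<close>

lemma ln_density_term:
  fixes q a C :: real
  assumes q: "1 < q" and a: "0 < a"
  shows "ln ((a / q ^ n) powr C * (q ^ n) ^ r) = C * (ln a - real n * ln q) + real r * (real n * ln q)"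
  using q a by (simp add: ln_mult ln_powr ln_div ln_realpow)

lemma less_powr_if_density_term_less:
  fixes q a C :: real and n r :: nat
  assumes q: "1 < q" and a: "0 < a" and r: "1 \<le> r" and C: "real r \<le> C"
    and less: "(a / q ^ n) powr C * (q ^ n) ^ r < q ^ (r - 1) * a ^ (r - 1)"
  shows "a < q powr (real n - (real n - real r + 1) / (C - real r + 1))"
proof -
  define k where "k = C - real r + 1"
  have k: "k > 0" using C by (simp add: k_def)
  have "ln ((a / q ^ n) powr C * (q ^ n) ^ r) < ln (q ^ (r - 1) * a ^ (r - 1))"
    using less a q by (subst ln_less_cancel_iff) auto
  then have "C * (ln a - real n * ln q) + real r * (real n * ln q) < (real r - 1) * ln q + (real r - 1) * ln a"
    using q a r by (simp add: ln_mult ln_div ln_realpow of_nat_diff)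
  moreover have "k * ln a - (real n * (C - real r) + (real r - 1)) * ln q
      = (C * (ln a - real n * ln q) + real r * (real n * ln q)) - ((real r - 1) * ln q + (real r - 1) * ln a)"
    by (simp add: k_def algebra_simps)
  ultimately have "k * ln a < (real n * (C - real r) + (real r - 1)) * ln q" by linarith
  then have "ln a < (real n * (C - real r) + (real r - 1)) / k * ln q"
    using k by (simp add: field_simps)
  also have "(real n * (C - real r) + (real r - 1)) / k = real n - (real n - real r + 1) / k"
    using k by (simp add: field_simps k_def)
  finally have "exp (ln a) < exp ((real n - (real n - real r + 1) / k) * ln q)" by simp
  then show ?thesis using a q by (simp add: k_def powr_def)
qed

lemma density_term_eq:
  fixes q a C D :: real and n r :: nat
  assumes q: "1 < q" and D: "0 < D" and C: "real r \<le> C" and r: "1 \<le> r"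
    and a: "a = D * q powr ((1 - 1 / (C - real r + 1)) * real n)"
  shows "q ^ (r - 1) * a ^ (r - 1) = q ^ (r - 1) / D powr (C - real r + 1) * ((a / q ^ n) powr C * (q ^ n) ^ r)"
proof -
  define k where "k = C - real r + 1"
  have k: "k > 0" using C by (simp add: k_def)
  have a_pos: "0 < a" using a D q by simp
  have ln_a: "ln a = ln D + (1 - 1 / k) * real n * ln q"
    using a D q by (simp add: ln_mult ln_powr k_def)
  have "ln (a ^ (r - 1) * D powr k) = real (r - 1) * ln a + k * ln D"
    using a_pos D by (simp add: ln_mult ln_realpow ln_powr)
  also have "\<dots> = C * (ln a - real n * ln q) + real r * (real n * ln q)"
  proof -
    have "real (r - 1) = real r - 1" using r by (simp add: of_nat_diff)
    then show ?thesis using ln_a k unfolding k_def by (simp add: field_simps)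
  qed
  also have "\<dots> = ln ((a / q ^ n) powr C * (q ^ n) ^ r)" using ln_density_term[OF q a_pos] by simp
  finally have "a ^ (r - 1) * D powr k = (a / q ^ n) powr C * (q ^ n) ^ r"
    using a_pos D q by (subst (asm) ln_inj_iff) auto
  then show ?thesis using D unfolding k_def by (simp add: field_simps)
qed

lemma weakly_sidorenko_count_less:
  fixes B :: "(nat \<Rightarrow> 'a::{finite,field}) set" and A :: "(nat \<Rightarrow> 'a) set"
  assumes B: "B \<subseteq> vecs m" "weakly_sidorenko C m B" "1 \<le> rank_aff B" and A: "A \<subseteq> vecs n" "A \<noteq> {}"
  defines "q \<equiv> real (card (UNIV :: 'a set))" and "r \<equiv> rank_aff B"
  shows "(real (card A) / q ^ n) powr C * (q ^ n) ^ r
    < real (card {B'. B' \<subseteq> A \<and> aff_isomorphic m n B B'}) * real (card (Aut_aff m B))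
      + q ^ (r - 1) * real (card A) ^ (r - 1)"
proof -
  have "(real (card A) / q ^ n) powr C * (q ^ n) ^ r \<le> real (hom_aff m n B A)"
    using B(2) A(1) unfolding weakly_sidorenko_def q_def r_def by blast
  also have "\<dots> < real (card {B'. B' \<subseteq> A \<and> aff_isomorphic m n B B'}) * real (card (Aut_aff m B))
      + q ^ (r - 1) * real (card A) ^ (r - 1)"
    using hom_aff_less[OF B(1) A B(3)] unfolding q_def r_def by (simp flip: of_nat_mult of_nat_power of_nat_add)
  finally show ?thesis .
qed

lemma ex_aff_witness:
  fixes B :: "(nat \<Rightarrow> 'a::{finite,field}) set"
  assumes "B \<noteq> {}"
  obtains A where "A \<subseteq> vecs n" "\<not> contains_aff_copy m n B A" "card A = ex_aff m n B"
proof -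
  let ?S = "{card A | A. A \<subseteq> (vecs n :: (nat \<Rightarrow> 'a) set) \<and> \<not> contains_aff_copy m n B A}"
  have "?S \<subseteq> card ` Pow (vecs n :: (nat \<Rightarrow> 'a) set)" by blast
  then have "finite ?S" using finite_vecs by (meson finite_Pow_iff finite_imageI finite_subset)
  moreover have "\<not> contains_aff_copy m n B ({} :: (nat \<Rightarrow> 'a) set)"
    using assms by (auto simp: contains_aff_copy_def aff_isomorphic_def aff_iso_def bij_betw_def)
  then have "?S \<noteq> {}" by blast
  ultimately have "ex_aff m n B \<in> ?S" unfolding ex_aff_def by (rule Max_in)
  then show thesis using that by auto
qed

lemma ex_aff_less:
  fixes B :: "(nat \<Rightarrow> 'a::{finite,field}) set"
  assumes B: "B \<subseteq> vecs m" "weakly_sidorenko C m B" "1 \<le> rank_aff B"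
  shows "real (ex_aff m n B) < real (card (UNIV :: 'a set))
    powr (real n - (real n - real (rank_aff B) + 1) / (C - real (rank_aff B) + 1))"
proof -
  have q: "1 < real (card (UNIV :: 'a set))" using card_UNIV_field_ge_2[where 'a='a] by linarith
  have "B \<noteq> {}" using B(3) rank_aff_empty[where 'a='a] by auto
  then obtain A where A: "A \<subseteq> vecs n" "\<not> contains_aff_copy m n B A" and card_A: "card A = ex_aff m n B"
    by (rule ex_aff_witness)
  show ?thesis
  proof (cases "A = {}")
    case True
    then show ?thesis using card_A q by simp
  next
    case False
    have no_copies: "{B'. B' \<subseteq> A \<and> aff_isomorphic m n B B'} = {}"
      using A(2) by (auto simp: contains_aff_copy_def)
    have "(real (card A) / real (card (UNIV :: 'a set)) ^ n) powr C * (real (card (UNIV :: 'a set)) ^ n) ^ rank_aff B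
        < real (card (UNIV :: 'a set)) ^ (rank_aff B - 1) * real (card A) ^ (rank_aff B - 1)"
      using weakly_sidorenko_count_less[OF B A(1) False] unfolding no_copies by simp
    moreover have "0 < real (card A)" using False finite_subset_vecs[OF A(1)] by (simp add: card_gt_0_iff)
    ultimately show ?thesis
      using less_powr_if_density_term_less[OF q _ B(3) weakly_sidorenko_rank_le[OF B(1,2)]] card_A by simp
  qed
qed

lemma card_copies_greater:
  fixes B :: "(nat \<Rightarrow> 'a::{finite,field}) set" and A :: "(nat \<Rightarrow> 'a) set"
  assumes B: "B \<subseteq> vecs m" "weakly_sidorenko C m B" "1 \<le> rank_aff B"
    and A: "A \<subseteq> vecs n" and D: "D > 0"
    and card_A: "real (card A) = D * real (card (UNIV :: 'a set)) powr ((1 - 1 / (C - real (rank_aff B) + 1)) * real n)"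
  defines "q \<equiv> real (card (UNIV :: 'a set))" and "r \<equiv> rank_aff B"
  shows "real (card {B'. B' \<subseteq> A \<and> aff_isomorphic m n B B'}) >
    (1 - q ^ (r - 1) / D powr (C - real r + 1)) * ((real (card A) / q ^ n) powr C * (q ^ n) ^ r / real (card (Aut_aff m B)))"
proof -
  define X where "X = (real (card A) / q ^ n) powr C * (q ^ n) ^ r"
  define copies where "copies = real (card {B'. B' \<subseteq> A \<and> aff_isomorphic m n B B'})"
  define aut where "aut = real (card (Aut_aff m B))"
  have q: "1 < q" unfolding q_def using card_UNIV_field_ge_2[where 'a='a] by linarith
  have "A \<noteq> {}" using card_A D q by (auto simp: q_def)
  then have less: "X < copies * aut + q ^ (r - 1) * real (card A) ^ (r - 1)"
    using weakly_sidorenko_count_less[OF B A] unfolding X_def copies_def aut_def q_def r_def by blast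
  have "Aut_aff m B \<noteq> {}" using restrict_id_in_Aut_aff by blast
  then have aut: "1 \<le> aut"
    using finite_Aut_aff[OF finite_subset_vecs[OF B(1)]] unfolding aut_def by (simp add: Suc_le_eq card_gt_0_iff)
  have "q ^ (r - 1) * real (card A) ^ (r - 1) = q ^ (r - 1) / D powr (C - real r + 1) * X"
    unfolding X_def using density_term_eq[OF q D weakly_sidorenko_rank_le[OF B(1,2)] B(3) card_A[folded q_def]]
    by (simp add: r_def)
  then have "(1 - q ^ (r - 1) / D powr (C - real r + 1)) * (X / aut) = (X - q ^ (r - 1) * real (card A) ^ (r - 1)) / aut"
    by (simp add: field_simps)
  also have "\<dots> < copies" using less aut by (simp add: pos_divide_less_eq)
  finally show ?thesis unfolding X_def copies_def aut_def by simp
qed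

theorem lemma3p2:
  fixes B :: "(nat \<Rightarrow> 'a::{finite,field}) set" and m :: nat and C :: real
  assumes "B \<subseteq> vecs m"
    and "weakly_sidorenko C m B"
    and "rank_aff B \<ge> 1"
  shows "(\<forall>n. real (ex_aff m n B) <
            real (card (UNIV :: 'a set)) powr (real n - (real n - real (rank_aff B) + 1) / (C - real (rank_aff B) + 1)))
    \<and> (\<forall>n (A :: (nat \<Rightarrow> 'a) set) D. A \<subseteq> vecs n \<and> D > 0 \<and>
          real (card A) = D * real (card (UNIV :: 'a set)) powr ((1 - 1 / (C - real (rank_aff B) + 1)) * real n) \<longrightarrow>
          real (card {B'. B' \<subseteq> A \<and> aff_isomorphic m n B B'}) >
            (1 - real (card (UNIV :: 'a set)) ^ (rank_aff B - 1) / D powr (C - real (rank_aff B) + 1)) *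
            ((real (card A) / real (card (UNIV :: 'a set)) ^ n) powr C * (real (card (UNIV :: 'a set)) ^ n) ^ rank_aff B
              / real (card (Aut_aff m B))))"
  using ex_aff_less[OF assms] card_copies_greater[OF assms] by blast

end
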